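(* In the setting below, suppose $k\le 50$ and $|S|\le 626$. Then none of $g_1,\dots,g_k$ lies in $G_-$; i.e., the subgraph $P$ of $H$ induced on $G_-$ and the subgraph $R$ of $H$ induced on $\{g_1,\dots,g_k\}$ are vertex disjoint.
   Context: Let $\Lambda_{24}$ be the Leech lattice scaled so minimal vectors have length $2$, $\mathcal C$ its set of $196560$ minimal vectors, and $\mathrm{Co}_0$ the finite group of linear isometries of $\mathbb{R}^{24}$ mapping $\Lambda_{24}$ onto itself (it acts transitively on $\mathcal C$). Fix an antipodal ($S=-S$) set $S\subseteq\mathcal C$ with $\langle x,y\rangle\le1$ for distinct $x,y\in S$. Let $k\ge1$, $S_1=S$, $g_1=\mathrm{id}$, and for $2\le j\le k$, $S_j=g_jS\setminus(S_1\cup\dots\cup S_{j-1})$ for some $g_j\in\mathrm{Co}_0$, with $|S_j|\ge|S|\bigl(1-\sum_{i<j}|S_i|/|\mathcal C|\bigr)$. Put $U_k=S_1\cup\dots\cup S_k$, $E_k=\mathbb{E}_g|gS\cap U_k|$ ($g$ uniform in $\mathrm{Co}_0$), $\delta(g)=|gS\cap U_k|-E_k$, $G_-=\{g\in\mathrm{Co}_0:\delta(g)<0\}$. $H$ is the graph on vertex set $\mathrm{Co}_0$ with $g,g'$ adjacent iff $gS\cap g'S=\emptyset$. *)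

theory Defs
  imports "HOL-Analysis.Analysis"
begin

text \<open>The Leech lattice (in its unimodular scaling, minimal vectors of length 2),
characterised as an even unimodular lattice in R^24 without roots (vectors of norm 2).
It is unique up to isometry, so quantifying over all such lattices is faithful.\<close>
definition leech_lattice :: "(real^24) set \<Rightarrow> bool" where
  "leech_lattice L \<longleftrightarrow>
     (\<exists>b :: 24 \<Rightarrow> real^24.
        L = {(\<Sum>i\<in>UNIV. of_int (c i) *\<^sub>R b i) | c :: 24 \<Rightarrow> int. True} \<and>
        \<bar>det (\<chi> i. b i)\<bar> = 1) \<and>
     (\<forall>x\<in>L. \<forall>y\<in>L. x \<bullet> y \<in> \<int>) \<and>
     (\<forall>x\<in>L. \<exists>n::int. x \<bullet> x = 2 * of_int n) \<and>
     (\<forall>x\<in>L. x \<bullet> x \<noteq> 2)"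

definition min_vectors :: "(real^24) set \<Rightarrow> (real^24) set" where
  "min_vectors L = {x\<in>L. norm x = 2}"

definition Co0 :: "(real^24) set \<Rightarrow> (real^24 \<Rightarrow> real^24) set" where
  "Co0 L = {g. orthogonal_transformation g \<and> g ` L = L}"

text \<open>Useq g S j = S_1 \<union> ... \<union> S_j, where S_j = g_j S minus the earlier ones.\<close>
primrec Useq :: "(nat \<Rightarrow> 'a \<Rightarrow> 'a) \<Rightarrow> 'a set \<Rightarrow> nat \<Rightarrow> 'a set" where
  "Useq g S 0 = {}"
| "Useq g S (Suc j) = Useq g S j \<union> (g (Suc j) ` S - Useq g S j)"

definition Sseq :: "(nat \<Rightarrow> 'a \<Rightarrow> 'a) \<Rightarrow> 'a set \<Rightarrow> nat \<Rightarrow> 'a set" where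
  "Sseq g S j = g j ` S - Useq g S (j - 1)"

definition Eavg :: "(real^24) set \<Rightarrow> (real^24) set \<Rightarrow> (real^24) set \<Rightarrow> real" where
  "Eavg L S U = (\<Sum>h\<in>Co0 L. real (card (h ` S \<inter> U))) / real (card (Co0 L))"

definition delta :: "(real^24) set \<Rightarrow> (real^24) set \<Rightarrow> (real^24) set \<Rightarrow> (real^24 \<Rightarrow> real^24) \<Rightarrow> real" where
  "delta L S U h = real (card (h ` S \<inter> U)) - Eavg L S U"

definition Gminus :: "(real^24) set \<Rightarrow> (real^24) set \<Rightarrow> (real^24) set \<Rightarrow> (real^24 \<Rightarrow> real^24) set" where
  "Gminus L S U = {h\<in>Co0 L. delta L S U h < 0}"

end

theory Submission
  imports Defs
begin

text \<open>Each \<open>g\<^sub>j S\<close> with \<open>j \<le> k\<close> lies inside \<open>U\<^sub>k\<close>, so \<open>|g\<^sub>j S \<inter> U\<^sub>k| = |S|\<close>, the largest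
possible value of \<open>|gS \<inter> U\<^sub>k|\<close>; in particular it is at least the average \<open>E\<^sub>k\<close>, i.e.
\<open>\<delta>(g\<^sub>j) \<ge> 0\<close>. Beyond this, the only fact used is that \<open>S\<close> is finite, since its points are
uniformly separated on a sphere.\<close>

lemma image_subset_Useq: "1 \<le> j \<Longrightarrow> j \<le> k \<Longrightarrow> g j ` S \<subseteq> Useq g S k"
proof (induction k)
  case 0
  then show ?case by simp
next
  case (Suc k)
  then show ?case by (cases "j = Suc k") auto
qed

lemma finite_spherical_code:
  fixes S :: "'a::euclidean_space set"
  assumes norm_eq: "\<And>x. x \<in> S \<Longrightarrow> norm x = r"
    and inner_le: "\<And>x y. x \<in> S \<Longrightarrow> y \<in> S \<Longrightarrow> x \<noteq> y \<Longrightarrow> x \<bullet> y \<le> c"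
    and "c < r\<^sup>2"
  shows "finite S"
proof -
  have "uniform_discrete S"
  proof (rule uniformI2)
    show "0 < sqrt (2 * (r\<^sup>2 - c))" using \<open>c < r\<^sup>2\<close> by simp
    fix x y assume "x \<in> S" "y \<in> S" "x \<noteq> y"
    have "(dist x y)\<^sup>2 = (norm x)\<^sup>2 + (norm y)\<^sup>2 - 2 * (x \<bullet> y)"
      by (simp add: dist_norm power2_norm_eq_inner inner_diff_left inner_diff_right inner_commute)
    also have "\<dots> \<ge> 2 * (r\<^sup>2 - c)"
      using norm_eq inner_le \<open>x \<in> S\<close> \<open>y \<in> S\<close> \<open>x \<noteq> y\<close> by fastforce
    finally show "sqrt (2 * (r\<^sup>2 - c)) \<le> dist x y"
      by (simp add: real_le_lsqrt)
  qed
  moreover have "bounded S"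
    using norm_eq by (auto simp: bounded_iff)
  ultimately show ?thesis
    using uniform_discrete_finite_iff by blast
qed

lemma Eavg_le_card:
  assumes "finite S"
  shows "Eavg L S U \<le> real (card S)"
proof -
  have "(\<Sum>h\<in>Co0 L. real (card (h ` S \<inter> U))) \<le> (\<Sum>h\<in>Co0 L. real (card S))"
  proof (rule sum_mono)
    fix h
    have "card (h ` S \<inter> U) \<le> card (h ` S)"
      using assms by (simp add: card_mono)
    also have "\<dots> \<le> card S"
      by (rule card_image_le[OF assms])
    finally show "real (card (h ` S \<inter> U)) \<le> real (card S)" by simp
  qed
  then show ?thesis
    unfolding Eavg_def by (cases "card (Co0 L) = 0") (auto simp: field_simps)
qed

lemma delta_nonneg_if_image_subset:
  assumes "finite S" "inj_on h S" "h ` S \<subseteq> U"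
  shows "delta L S U h \<ge> 0"
proof -
  have "card (h ` S \<inter> U) = card S"
    using assms by (simp add: Int_absorb2 card_image)
  then show ?thesis
    using Eavg_le_card[OF \<open>finite S\<close>] by (simp add: delta_def)
qed

theorem lemma4p6:
  fixes L :: "(real^24) set" and S :: "(real^24) set"
    and g :: "nat \<Rightarrow> real^24 \<Rightarrow> real^24" and k :: nat
  assumes "leech_lattice L"
    and "S \<subseteq> min_vectors L"
    and "\<forall>x\<in>S. - x \<in> S"
    and "\<forall>x\<in>S. \<forall>y\<in>S. x \<noteq> y \<longrightarrow> x \<bullet> y \<le> 1"
    and "k \<ge> 1"
    and "g 1 = id"
    and "\<forall>j\<in>{2..k}. g j \<in> Co0 L"
    and "\<forall>j\<in>{2..k}. real (card (Sseq g S j)) \<ge>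
           real (card S) * (1 - (\<Sum>i\<in>{1..<j}. real (card (Sseq g S i))) / real (card (min_vectors L)))"
    and "k \<le> 50"
    and "card S \<le> 626"
  shows "Gminus L S (Useq g S k) \<inter> g ` {1..k} = {}"
proof -
  have "finite S"
    by (rule finite_spherical_code[where r = 2 and c = 1])
      (use assms(2,4) in \<open>auto simp: min_vectors_def\<close>)
  have "g j \<notin> Gminus L S (Useq g S k)" if "j \<in> {1..k}" for j
  proof
    assume "g j \<in> Gminus L S (Useq g S k)"
    then have "g j \<in> Co0 L" and negative: "delta L S (Useq g S k) (g j) < 0"
      by (simp_all add: Gminus_def)
    have "inj_on (g j) S"
      using \<open>g j \<in> Co0 L\<close> orthogonal_transformation_inj
      by (auto simp: Co0_def intro: inj_on_subset)
    moreover have "g j ` S \<subseteq> Useq g S k"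
      using that by (intro image_subset_Useq) auto
    ultimately have "delta L S (Useq g S k) (g j) \<ge> 0"
      by (rule delta_nonneg_if_image_subset[OF \<open>finite S\<close>])
    with negative show False by simp
  qed
  then show ?thesis by blast
qed

end
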